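(* Let $X$ be a real-valued heavy-tailed random variable with $0<E(X)<\infty$ and $E((X^+)^{1+\delta})<\infty$ for some $\delta>0$, let $(X_i)_{i\ge1}$ be IID with the law of $X$, let $N$ be a light-tailed random variable with values in $\{1,2,3,\dots\}$ independent of $(X_i)$, and put $S_N=\sum_{k=1}^N X_k$. If $h_X$ is a natural scale of $X$ with $h_X(x)\ge(1+\delta)\log x$ for all large $x$, then $h_X$ is a natural scale of $S_N$.
   Context: $R_Y(x):=-\log P(Y>x)$. $Y$ is heavy-tailed if $E(e^{sY})=\infty$ for all $s>0$, light-tailed otherwise. A natural scale of a heavy-tailed $Y$ is a concave $h:[0,\infty)\to[0,\infty)$ with $h(0)=0$, $h(x)\to\infty$, and $\liminf_{x\to\infty}R_Y(x)/h(x)=1$. $y^+=\max(0,y)$. *)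

theory Defs
  imports "HOL-Probability.Probability"
begin

definition tail_rate :: "'a measure \<Rightarrow> ('a \<Rightarrow> real) \<Rightarrow> real \<Rightarrow> ereal" where
  "tail_rate M Y x =
     (let p = measure M {\<omega> \<in> space M. Y \<omega> > x} in
      if p = 0 then \<infinity> else ereal (- ln p))"

definition heavy_tailed :: "'a measure \<Rightarrow> ('a \<Rightarrow> real) \<Rightarrow> bool" where
  "heavy_tailed M Y \<longleftrightarrow>
     (\<forall>s>0. (\<integral>\<^sup>+ \<omega>. ennreal (exp (s * Y \<omega>)) \<partial>M) = \<infinity>)"

definition light_tailed :: "'a measure \<Rightarrow> ('a \<Rightarrow> real) \<Rightarrow> bool" where
  "light_tailed M Y \<longleftrightarrow> \<not> heavy_tailed M Y"

definition natural_scale :: "'a measure \<Rightarrow> ('a \<Rightarrow> real) \<Rightarrow> (real \<Rightarrow> real) \<Rightarrow> bool" where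
  "natural_scale M Y h \<longleftrightarrow>
     heavy_tailed M Y \<and>
     concave_on {0..} h \<and> (\<forall>x\<ge>0. h x \<ge> 0) \<and> h 0 = 0 \<and>
     filterlim h at_top at_top \<and>
     Liminf at_top (\<lambda>x. tail_rate M Y x / ereal (h x)) = 1"

end

(*
  Since h is concave with h 0 = 0, it is subadditive and nondecreasing; heaviness of X moreover
  forces h x / x \<rightarrow> 0.

  Lower bound: some n \<ge> 1 has P(N = n) > 0, and on {N = n} the sum exceeds y - c as soon as
  X 1 > y and X 2, ..., X n > -c', so P(S > y - c) \<ge> K P(X > y). Subadditivity of h turns this
  into liminf R_S / h \<le> 1.

  Upper bound: on {N = n} either some X i exceeds x, or S is the sum of the truncations
  min (X i) x, to which Markov's inequality applies with \<theta> = (1 - \<epsilon>) h x / x: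
  P(S > x, N = n) \<le> P(N = n) (n P(X > x) + exp (-\<theta> x) (E exp (\<theta> min X x)) ^ n).
  As \<theta> \<rightarrow> 0, the truncated moment generating function eventually stays below exp s with
  E exp (s N) < \<infinity>, and summing over n gives P(S > x) \<le> K exp (-(1 - \<epsilon>) h x), i.e.
  liminf R_S / h \<ge> 1.
*)

theory Submission
  imports Defs
begin

section \<open>Concave scale functions and elementary bounds\<close>

lemma concave_on_scaled_le:
  fixes h :: "real \<Rightarrow> real"
  assumes cc: "concave_on {0..} h" and h0: "h 0 = 0"
    and t: "0 \<le> t" "t \<le> x" and x: "0 < x"
  shows "t / x * h x \<le> h t"
proof -
  have "h ((1 - t/x) *\<^sub>R 0 + (t/x) *\<^sub>R x) \<ge> (1 - t/x) * h 0 + (t/x) * h x"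
    using concave_onD[OF cc, of "t/x" 0 x] t x by auto
  then show ?thesis using h0 x by simp
qed

lemma concave_on_subadditive:
  fixes h :: "real \<Rightarrow> real"
  assumes cc: "concave_on {0..} h" and h0: "h 0 = 0" and a: "0 \<le> a" and b: "0 \<le> b"
  shows "h (a + b) \<le> h a + h b"
proof (cases "a + b = 0")
  case True
  then have "a = 0" "b = 0" using a b by auto
  then show ?thesis using h0 by simp
next
  case False
  then have s: "0 < a + b" using a b by auto
  have "a / (a+b) * h (a+b) \<le> h a" "b / (a+b) * h (a+b) \<le> h b"
    using concave_on_scaled_le[OF cc h0 _ _ s] a b by auto
  moreover have "a / (a+b) * h (a+b) + b / (a+b) * h (a+b) = (a+b) / (a+b) * h (a+b)"
    by (metis add_divide_distrib distrib_right)
  ultimately show ?thesis using s by simp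
qed

lemma concave_on_nonneg_mono:
  fixes h :: "real \<Rightarrow> real"
  assumes cc: "concave_on {0..} h" and nn: "\<And>x. x \<ge> 0 \<Longrightarrow> h x \<ge> 0"
    and a: "0 \<le> a" and ab: "a \<le> b"
  shows "h a \<le> h b"
proof (rule ccontr)
  assume "\<not> h a \<le> h b"
  define d where "d = h a - h b"
  have d: "d > 0" and ha: "h a > 0" and ab': "a < b"
    using \<open>\<not> h a \<le> h b\<close> nn[of b] a ab unfolding d_def by (auto simp: order.order_iff_strict)
  \<comment> \<open>b is a convex combination of a and a far point z; a decrease from a to b would force h z < 0\<close>
  define z where "z = a + (b - a) * (h a / d + 1)"
  define t where "t = d / (h a + d)"
  have t01: "0 \<le> t" "t \<le> 1" using d ha t_def by auto
  have zb: "z \<ge> b" using z_def ab' ha d by (simp add: algebra_simps)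
  have "h a / d + 1 = (h a + d) / d" using d by (simp add: field_simps)
  then have "t * (h a / d + 1) = 1" unfolding t_def using d ha by simp
  moreover have "(1 - t) *\<^sub>R a + t *\<^sub>R z = a + (b - a) * (t * (h a / d + 1))"
    unfolding z_def by (simp add: algebra_simps)
  ultimately have beq: "(1 - t) *\<^sub>R a + t *\<^sub>R z = b" by simp
  have "h ((1 - t) *\<^sub>R a + t *\<^sub>R z) \<ge> (1 - t) * h a + t * h z"
    using concave_onD[OF cc t01, of a z] a zb ab by auto
  moreover have "t * h z \<ge> 0" using t01 nn[of z] zb a ab by auto
  moreover have "(1 - t) * h a = h a - d * h a / (h a + d)" unfolding t_def by (simp add: algebra_simps)
  moreover have "d * h a / (h a + d) < d" using d ha by (simp add: divide_less_eq)
  ultimately show False using beq d_def by simp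
qed

lemma exp_minus_one_le_mult_exp: "exp (l::real) - 1 \<le> l * exp l"
proof -
  have "(1 - l) * exp l \<le> exp (- l) * exp l"
    using exp_ge_add_one_self[of "- l"] by (simp add: mult_right_mono)
  then show ?thesis by (simp add: exp_minus field_simps)
qed

lemma exp_neg_geometric_ratio_le:
  fixes z :: real
  assumes z: "z > 0"
  shows "exp (- z) / (1 - exp (- z)) \<le> 1 / z"
proof -
  have "z \<le> exp z - 1" using exp_ge_add_one_self[of z] by linarith
  then have "z * exp (- z) \<le> (exp z - 1) * exp (- z)" by (intro mult_right_mono) auto
  also have "\<dots> = 1 - exp (- z)" by (simp add: algebra_simps exp_minus)
  finally show ?thesis using z by (simp add: divide_le_eq field_simps)
qed

lemma suminf_ennreal_geometric_Suc:
  fixes a r :: real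
  assumes "0 \<le> a" "0 \<le> r" "r < 1"
  shows "(\<Sum>k. ennreal (a * r ^ Suc k)) = ennreal (a * r / (1 - r))"
proof -
  have "(\<lambda>k. (a * r) * r ^ k) sums ((a * r) * (1 / (1 - r)))"
    using assms by (intro sums_mult geometric_sums) simp
  then have "(\<lambda>k. a * r ^ Suc k) sums (a * r / (1 - r))" by (simp add: algebra_simps)
  then show ?thesis using assms by (subst suminf_ennreal2) (auto simp: sums_iff)
qed

lemma exists_nat_exp_neg_le:
  fixes h :: "real \<Rightarrow> real"
  assumes h: "filterlim h at_top at_top" and a: "a > 0" and b: "b > 0"
  shows "\<exists>L::nat. exp (- a * h (real L)) \<le> b"
proof -
  obtain t0 where t0: "\<And>t. t \<ge> t0 \<Longrightarrow> h t > - ln b / a"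
    using h unfolding filterlim_at_top_dense eventually_at_top_linorder by blast
  obtain L :: nat where "t0 \<le> real L" using real_arch_simple by blast
  then have "a * (- (ln b / a)) < a * h (real L)" using t0 a by (intro mult_strict_left_mono) auto
  then have "- ln b < a * h (real L)" using a by simp
  then have "exp (- a * h (real L)) < exp (ln b)" by simp
  then show ?thesis using b by (auto intro: less_imp_le)
qed

lemma truncated_mgf_sum_le:
  fixes e \<mu> C \<eta> :: real and L :: nat
  assumes e: "0 < e" "e < 1" and \<mu>: "\<mu> > 0" and C: "C \<ge> 0" and \<eta>: "\<eta> \<ge> 0"
  defines "\<theta> \<equiv> (1 - e) * \<mu>" and "q \<equiv> exp (- (e/2) * \<mu>)"
  shows "C * (exp \<theta> - 1) * real L + C * (exp \<theta> - 1) * \<eta> * q / (1 - q)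
    \<le> exp \<theta> * (C * \<theta> * real L + C * \<eta> * (2 / e))"
proof -
  have \<theta>: "\<theta> \<ge> 0" using e \<mu> unfolding \<theta>_def by simp
  have q: "0 \<le> q" "q < 1" using e \<mu> unfolding q_def by auto
  have inc: "exp \<theta> - 1 \<le> \<theta> * exp \<theta>" by (rule exp_minus_one_le_mult_exp)
  have "C * (exp \<theta> - 1) * real L \<le> C * (\<theta> * exp \<theta>) * real L"
    using inc C by (intro mult_right_mono mult_left_mono) auto
  moreover have "C * (exp \<theta> - 1) * \<eta> * q / (1 - q) \<le> exp \<theta> * (C * \<eta> * (2 / e))"
  proof -
    have "q / (1 - q) \<le> 1 / ((e/2) * \<mu>)"
      unfolding q_def using exp_neg_geometric_ratio_le[of "(e/2) * \<mu>"] e \<mu> by simp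
    then have "(exp \<theta> - 1) * (q / (1 - q)) \<le> (\<theta> * exp \<theta>) * (1 / ((e/2) * \<mu>))"
      using inc \<theta> q by (intro mult_mono) auto
    also have "\<dots> = exp \<theta> * (2 * (1 - e) / e)" unfolding \<theta>_def using \<mu> e by (simp add: field_simps)
    also have "\<dots> \<le> exp \<theta> * (2 / e)" using e by (intro mult_left_mono) (auto simp: divide_right_mono)
    finally have "C * \<eta> * ((exp \<theta> - 1) * (q / (1 - q))) \<le> C * \<eta> * (exp \<theta> * (2 / e))"
      using C \<eta> by (intro mult_left_mono) auto
    then show ?thesis by (simp add: algebra_simps)
  qed
  ultimately show ?thesis by (simp add: algebra_simps)
qed

lemma mono_le_increment_indicator_sum:
  fixes g :: "real \<Rightarrow> real"
  assumes mono: "mono g" and g1: "0 \<le> g 1"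
  shows "ennreal (g y) \<le> ennreal (g 1) +
     (\<Sum>k. ennreal (g (real k + 2) - g (real k + 1)) * indicator {r. r > real k + 1} y)"
proof (cases "y \<le> 1")
  case True
  then have "ennreal (g y) \<le> ennreal (g 1)" using monoD[OF mono True] by (simp add: ennreal_leI)
  then show ?thesis by (rule add_increasing2[rotated]) simp
next
  case False
  define K where "K = nat (ceiling y) - 1"
  have eK: "real K + 1 = real_of_int (ceiling y)"
    using False le_of_int_ceiling[of y] unfolding K_def by linarith
  have K1: "y \<le> real K + 1" and K2: "real K < y"
    using eK ceiling_correct[of y] by linarith+
  have dn: "0 \<le> g (real k + 2) - g (real k + 1)" for k
    using monoD[OF mono, of "real k + 1" "real k + 2"] by simp
  have "g y \<le> g (real K + 1)" using K1 monoD[OF mono] by simp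
  also have "\<dots> = g 1 + (\<Sum>k<K. g (real (Suc k) + 1) - g (real k + 1))"
    by (subst sum_lessThan_telescope[of "\<lambda>k. g (real k + 1)"]) simp
  finally have "ennreal (g y) \<le> ennreal (g 1 + (\<Sum>k<K. g (real k + 2) - g (real k + 1)))"
    by (intro ennreal_leI) (simp add: add.commute)
  also have "\<dots> = ennreal (g 1) + (\<Sum>k<K. ennreal (g (real k + 2) - g (real k + 1)))"
    using g1 dn by (simp add: ennreal_plus sum_nonneg sum_ennreal)
  also have "(\<Sum>k<K. ennreal (g (real k + 2) - g (real k + 1))) =
      (\<Sum>k<K. ennreal (g (real k + 2) - g (real k + 1)) * indicator {r. r > real k + 1} y)"
    using K2 by (intro sum.cong) auto
  also have "\<dots> \<le> (\<Sum>k. ennreal (g (real k + 2) - g (real k + 1)) * indicator {r. r > real k + 1} y)"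
    by (rule sum_le_suminf) auto
  finally show ?thesis by (simp add: add_left_mono)
qed

lemma (in prob_space) nn_integral_mono_le_tail_sum:
  fixes g :: "real \<Rightarrow> real" and Y :: "'a \<Rightarrow> real"
  assumes Y[measurable]: "Y \<in> borel_measurable M" and mono: "mono g" and g1: "0 \<le> g 1"
  shows "(\<integral>\<^sup>+\<omega>. ennreal (g (Y \<omega>)) \<partial>M) \<le> ennreal (g 1) +
     (\<Sum>k. ennreal (g (real k + 2) - g (real k + 1)) * ennreal (prob {\<omega>\<in>space M. Y \<omega> > real k + 1}))"
proof -
  have "(\<integral>\<^sup>+\<omega>. ennreal (g (Y \<omega>)) \<partial>M) \<le> (\<integral>\<^sup>+\<omega>. ennreal (g 1) +
     (\<Sum>k. ennreal (g (real k + 2) - g (real k + 1)) * indicator {\<omega>\<in>space M. Y \<omega> > real k + 1} \<omega>) \<partial>M)"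
    using mono_le_increment_indicator_sum[OF mono g1]
    by (intro nn_integral_mono) (simp add: indicator_def)
  also have "\<dots> = ennreal (g 1) + (\<Sum>k. ennreal (g (real k + 2) - g (real k + 1)) *
      emeasure M {\<omega>\<in>space M. Y \<omega> > real k + 1})"
    by (subst nn_integral_add) (auto simp: nn_integral_suminf nn_integral_cmult_indicator emeasure_space_1)
  also have "\<dots> = ennreal (g 1) + (\<Sum>k. ennreal (g (real k + 2) - g (real k + 1)) *
      ennreal (prob {\<omega>\<in>space M. Y \<omega> > real k + 1}))"
    by (simp add: emeasure_eq_measure)
  finally show ?thesis .
qed

lemma (in prob_space) nn_integral_exp_finite_if_exponential_tail:
  fixes Y :: "'a \<Rightarrow> real"
  assumes Y[measurable]: "Y \<in> borel_measurable M" and \<beta>: "\<beta> > 0" and C: "C \<ge> 0"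
    and tail: "\<And>t. t > 0 \<Longrightarrow> prob {\<omega>\<in>space M. Y \<omega> > t} \<le> C * exp (- 2 * \<beta> * t)"
  shows "(\<integral>\<^sup>+\<omega>. ennreal (exp (\<beta> * Y \<omega>)) \<partial>M) < \<infinity>"
proof -
  define g where "g y = exp (\<beta> * y)" for y
  have mono: "mono g" unfolding g_def mono_def using \<beta> by auto
  have increment: "ennreal (g (real k + 2) - g (real k + 1)) * ennreal (prob {\<omega>\<in>space M. Y \<omega> > real k + 1})
      \<le> ennreal (C * (exp \<beta> - 1) * exp (- \<beta>) ^ Suc k)" for k
  proof -
    define t where "t = real k + 1"
    have inc: "g (real k + 2) - g (real k + 1) = exp (\<beta> * t) * (exp \<beta> - 1)"
      unfolding g_def t_def by (simp add: algebra_simps exp_add[symmetric])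
    have "exp (\<beta> * t) * (exp \<beta> - 1) * prob {\<omega>\<in>space M. Y \<omega> > t}
        \<le> exp (\<beta> * t) * (exp \<beta> - 1) * (C * exp (- 2 * \<beta> * t))"
      using tail[of t] \<beta> unfolding t_def by (intro mult_left_mono) auto
    also have "\<dots> = C * (exp \<beta> - 1) * exp (- \<beta> * t)"
      by (simp add: algebra_simps exp_add[symmetric])
    also have "- \<beta> * t = real (Suc k) * (- \<beta>)" unfolding t_def by (simp add: algebra_simps)
    finally have "exp (\<beta> * t) * (exp \<beta> - 1) * prob {\<omega>\<in>space M. Y \<omega> > t}
        \<le> C * (exp \<beta> - 1) * exp (- \<beta>) ^ Suc k"
      by (simp only: exp_of_nat_mult)
    then show ?thesis using inc \<beta> unfolding t_def by (simp add: ennreal_mult[symmetric] ennreal_leI)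
  qed
  have "(\<integral>\<^sup>+\<omega>. ennreal (g (Y \<omega>)) \<partial>M) \<le> ennreal (g 1) +
     (\<Sum>k. ennreal (g (real k + 2) - g (real k + 1)) * ennreal (prob {\<omega>\<in>space M. Y \<omega> > real k + 1}))"
    by (rule nn_integral_mono_le_tail_sum[OF Y mono]) (simp add: g_def)
  also have "\<dots> \<le> ennreal (g 1) + (\<Sum>k. ennreal (C * (exp \<beta> - 1) * exp (- \<beta>) ^ Suc k))"
    by (intro add_left_mono suminf_le increment) auto
  also have "\<dots> = ennreal (g 1) + ennreal (C * (exp \<beta> - 1) * exp (- \<beta>) / (1 - exp (- \<beta>)))"
    using \<beta> C by (subst suminf_ennreal_geometric_Suc) auto
  finally show ?thesis unfolding g_def by (rule order.strict_trans1) simp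
qed

lemma (in prob_space) exists_prob_gt_neg_pos:
  fixes Y :: "'a \<Rightarrow> real"
  assumes [measurable]: "Y \<in> borel_measurable M"
  shows "\<exists>c\<ge>0. prob {\<omega>\<in>space M. Y \<omega> > - c} > 0"
proof (rule ccontr)
  assume "\<not> ?thesis"
  then have "prob {\<omega>\<in>space M. Y \<omega> > - real m} = 0" for m :: nat
    by (metis measure_le_0_iff not_less of_nat_0_le_iff)
  then have "emeasure M {\<omega>\<in>space M. Y \<omega> > - real m} = 0" for m :: nat
    by (simp add: emeasure_eq_measure)
  then have "emeasure M (\<Union>m. {\<omega>\<in>space M. Y \<omega> > - real m}) = 0"
    by (intro emeasure_UN_eq_0) auto
  moreover have "(\<Union>m. {\<omega>\<in>space M. Y \<omega> > - real m}) = space M"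
  proof safe
    fix \<omega> assume "\<omega> \<in> space M"
    obtain m :: nat where "real m > - Y \<omega>" using reals_Archimedean2 by blast
    then have "- real m < Y \<omega>" by linarith
    then show "\<omega> \<in> (\<Union>m. {\<omega>\<in>space M. Y \<omega> > - real m})" using \<open>\<omega> \<in> space M\<close> by blast
  qed
  ultimately show False using emeasure_space_1 by simp
qed

section \<open>Tail rates\<close>

lemma tail_rate_divide_less_iff:
  fixes Y :: "'a \<Rightarrow> real"
  assumes "h x > 0"
  shows "tail_rate M Y x / ereal (h x) < ereal r \<longleftrightarrow>
    measure M {\<omega>\<in>space M. Y \<omega> > x} > 0 \<and> - ln (measure M {\<omega>\<in>space M. Y \<omega> > x}) < r * h x"
  using assms by (auto simp: tail_rate_def Let_def zero_less_measure_iff field_simps)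

lemma tail_rate_divide_greater_iff:
  fixes Y :: "'a \<Rightarrow> real"
  assumes "h x > 0"
  shows "ereal r < tail_rate M Y x / ereal (h x) \<longleftrightarrow>
    measure M {\<omega>\<in>space M. Y \<omega> > x} = 0 \<or> r * h x < - ln (measure M {\<omega>\<in>space M. Y \<omega> > x})"
  using assms by (auto simp: tail_rate_def Let_def field_simps)

lemma eventually_tail_prob_le_exp:
  fixes Y :: "'a \<Rightarrow> real" and h :: "real \<Rightarrow> real"
  assumes lim: "1 \<le> Liminf at_top (\<lambda>x. tail_rate M Y x / ereal (h x))"
    and h: "filterlim h at_top at_top" and e: "0 < e"
  shows "eventually (\<lambda>t. measure M {\<omega>\<in>space M. Y \<omega> > t} \<le> exp (- (1 - e) * h t)) at_top"
proof -
  have "ereal (1 - e) < 1" using e by simp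
  then have "eventually (\<lambda>t. ereal (1 - e) < tail_rate M Y t / ereal (h t)) at_top"
    using lim by (intro less_LiminfD) (rule order.strict_trans2)
  moreover have "eventually (\<lambda>t. h t > 0) at_top"
    using h by (simp add: filterlim_at_top_dense)
  ultimately show ?thesis
  proof eventually_elim
    case (elim t)
    define P where "P = measure M {\<omega>\<in>space M. Y \<omega> > t}"
    have "P = 0 \<or> ln P < - (1 - e) * h t"
      using elim tail_rate_divide_greater_iff[of h t "1 - e" M Y] unfolding P_def
      by (auto simp: algebra_simps)
    moreover have "P \<ge> 0" unfolding P_def by simp
    ultimately show ?case unfolding P_def[symmetric]
      by (metis exp_ge_zero exp_less_mono exp_ln less_eq_real_def not_less)
  qed
qed

lemma Liminf_tail_rate_ge_one:
  fixes Y :: "'a \<Rightarrow> real" and h :: "real \<Rightarrow> real"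
  assumes h: "filterlim h at_top at_top"
    and bound: "\<And>e. 0 < e \<Longrightarrow> e < 1 \<Longrightarrow> \<exists>K>0.
      eventually (\<lambda>x. measure M {\<omega>\<in>space M. Y \<omega> > x} \<le> K * exp (- (1 - e) * h x)) at_top"
  shows "1 \<le> Liminf at_top (\<lambda>x. tail_rate M Y x / ereal (h x))"
  unfolding le_Liminf_iff
proof (intro allI impI)
  fix y :: ereal assume "y < 1"
  then obtain r :: real where r: "y < ereal r" "r < 1" using ereal_dense2 by force
  define e where "e = (1 - max r 0) / 2"
  have e: "0 < e" "e < 1" "1 - 2 * e = max r 0" using r unfolding e_def by (auto simp: field_simps)
  obtain K where K: "K > 0"
    and ev: "eventually (\<lambda>x. measure M {\<omega>\<in>space M. Y \<omega> > x} \<le> K * exp (- (1 - e) * h x)) at_top"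
    using bound[OF e(1,2)] by blast
  have "eventually (\<lambda>x. h x > max 0 (ln K / e)) at_top"
    using h filterlim_at_top_dense by blast
  with ev show "eventually (\<lambda>x. y < tail_rate M Y x / ereal (h x)) at_top"
  proof eventually_elim
    case (elim x)
    define P where "P = measure M {\<omega>\<in>space M. Y \<omega> > x}"
    have hx: "h x > 0" "ln K < e * h x"
      using elim e by (auto simp: pos_divide_less_eq mult.commute)
    have pos: "r * h x < - ln P" if P: "P > 0"
    proof -
      have "ln P \<le> ln (K * exp (- (1 - e) * h x))"
        using elim P K unfolding P_def[symmetric] by simp
      also have "\<dots> = ln K - (1 - e) * h x" using K by (simp add: ln_mult algebra_simps)
      moreover have "r * h x \<le> (1 - 2 * e) * h x"
        using hx e(3) by (intro mult_right_mono) auto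
      ultimately show ?thesis using hx by (simp add: algebra_simps)
    qed
    have "P = 0 \<or> r * h x < - ln P"
      using pos by (cases "P > 0") (auto simp: P_def not_less measure_le_0_iff)
    then have "ereal r < tail_rate M Y x / ereal (h x)"
      using tail_rate_divide_greater_iff[of h x r M Y] hx unfolding P_def by simp
    with r(1) show ?case by (rule order.strict_trans)
  qed
qed

lemma Liminf_tail_rate_le_one:
  fixes Y S :: "'a \<Rightarrow> real" and h :: "real \<Rightarrow> real"
  assumes cc: "concave_on {0..} h" and nn: "\<And>x. x \<ge> 0 \<Longrightarrow> h x \<ge> 0" and h0: "h 0 = 0"
    and h: "filterlim h at_top at_top"
    and limY: "Liminf at_top (\<lambda>x. tail_rate M Y x / ereal (h x)) \<le> 1"
    and c: "c \<ge> 0" and K: "K > 0"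
    and lower: "\<And>y. K * measure M {\<omega>\<in>space M. Y \<omega> > y} \<le> measure M {\<omega>\<in>space M. S \<omega> > y - c}"
  shows "Liminf at_top (\<lambda>x. tail_rate M S x / ereal (h x)) \<le> 1"
proof (rule ccontr)
  assume "\<not> ?thesis"
  then have "1 < Liminf at_top (\<lambda>x. tail_rate M S x / ereal (h x))" by simp
  then obtain r :: real
    where r: "1 < ereal r" "ereal r < Liminf at_top (\<lambda>x. tail_rate M S x / ereal (h x))"
    using ereal_dense2 by blast
  define \<rho> where "\<rho> = (1 + r) / 2"
  have \<rho>: "1 < \<rho>" "\<rho> < r" using r unfolding \<rho>_def by auto
  have frequently_Y: "\<exists>y\<ge>T. tail_rate M Y y / ereal (h y) < ereal \<rho>" for T
  proof (rule ccontr)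
    assume "\<not> ?thesis"
    then have "eventually (\<lambda>y. ereal \<rho> \<le> tail_rate M Y y / ereal (h y)) at_top"
      unfolding eventually_at_top_linorder by (auto simp: not_less)
    then have "ereal \<rho> \<le> Liminf at_top (\<lambda>x. tail_rate M Y x / ereal (h x))"
      by (rule Liminf_bounded)
    then have "ereal \<rho> \<le> 1" using limY by (rule order.trans)
    then show False using \<rho> by simp
  qed
  define H where "H = max 0 ((\<rho> * h c - ln K) / (r - \<rho>))"
  have "eventually (\<lambda>z. h z > H) at_top" using h filterlim_at_top_dense by blast
  with less_LiminfD[OF r(2)] eventually_ge_at_top[of 0]
  have "eventually (\<lambda>z. ereal r < tail_rate M S z / ereal (h z) \<and> h z > H \<and> z \<ge> 0) at_top"
    by eventually_elim auto
  then obtain T where T: "\<And>z. z \<ge> T \<Longrightarrow> ereal r < tail_rate M S z / ereal (h z) \<and> h z > H \<and> z \<ge> 0"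
    unfolding eventually_at_top_linorder by blast
  obtain y where y: "y \<ge> T + c" "tail_rate M Y y / ereal (h y) < ereal \<rho>"
    using frequently_Y by blast
  define z where "z = y - c"
  have z: "ereal r < tail_rate M S z / ereal (h z)" "h z > H" "z \<ge> 0"
    using T[of z] y unfolding z_def by auto
  have hz: "h z > 0" "(\<rho> * h c - ln K) < (r - \<rho>) * h z"
    using z \<rho> unfolding H_def by (auto simp: pos_divide_less_eq mult.commute)
  have y_eq: "y = z + c" unfolding z_def by simp
  have hy: "h y \<le> h z + h c"
    unfolding y_eq by (rule concave_on_subadditive[OF cc h0 z(3) c])
  have "h z \<le> h y"
    unfolding y_eq using concave_on_nonneg_mono[OF cc nn z(3), of "z + c"] c by linarith
  then have "h y > 0" using hz by simp
  define PY where "PY = measure M {\<omega>\<in>space M. Y \<omega> > y}"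
  define PS where "PS = measure M {\<omega>\<in>space M. S \<omega> > z}"
  have PY: "PY > 0" "- ln PY < \<rho> * h y"
    using y(2) tail_rate_divide_less_iff[of h y M Y \<rho>] \<open>h y > 0\<close> unfolding PY_def by auto
  have PS: "K * PY \<le> PS" using lower[of y] unfolding PY_def PS_def y_eq by simp
  then have "PS > 0" using K PY by (meson mult_pos_pos less_le_trans)
  have "- ln PS \<le> - ln (K * PY)" using PS K PY \<open>PS > 0\<close> by simp
  also have "\<dots> = - ln K - ln PY" using K PY by (simp add: ln_mult)
  also have "\<dots> < - ln K + \<rho> * (h z + h c)"
    using PY(2) mult_left_mono[OF hy, of \<rho>] \<rho> by linarith
  also have "\<dots> < r * h z" using hz by (simp add: algebra_simps)
  finally have "- ln PS < r * h z" .
  moreover have "PS = 0 \<or> r * h z < - ln PS"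
    using z(1) tail_rate_divide_greater_iff[of h z r M S] hz unfolding PS_def by simp
  ultimately show False using \<open>PS > 0\<close> by simp
qed

section \<open>A random variable with a natural scale\<close>

locale natural_scale_rv = prob_space +
  fixes Y :: "'a \<Rightarrow> real" and h :: "real \<Rightarrow> real"
  assumes Y_measurable[measurable]: "Y \<in> borel_measurable M"
    and natural_scale: "natural_scale M Y h"
begin

lemma heavy_tailed: "heavy_tailed M Y"
  and h_concave: "concave_on {0..} h" and h_nonneg: "\<And>x. x \<ge> 0 \<Longrightarrow> h x \<ge> 0"
  and h_zero: "h 0 = 0" and h_at_top: "filterlim h at_top at_top"
  and Liminf_eq_one: "Liminf at_top (\<lambda>x. tail_rate M Y x / ereal (h x)) = 1"
  using natural_scale unfolding natural_scale_def by auto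

lemma tail_prob_le_uniform:
  assumes e: "0 < e"
  shows "\<exists>C\<ge>1. \<forall>t\<ge>0. prob {\<omega>\<in>space M. Y \<omega> > t} \<le> C * exp (- (1 - e) * h t)"
proof -
  have "1 \<le> Liminf at_top (\<lambda>x. tail_rate M Y x / ereal (h x))" using Liminf_eq_one by simp
  from eventually_tail_prob_le_exp[OF this h_at_top e] obtain t0
    where t0: "\<And>t. t \<ge> t0 \<Longrightarrow> prob {\<omega>\<in>space M. Y \<omega> > t} \<le> exp (- (1 - e) * h t)"
    unfolding eventually_at_top_linorder by blast
  define t1 where "t1 = max t0 0"
  \<comment> \<open>below t0, monotonicity of h lets the constant exp (h t1) absorb the trivial bound 1\<close>
  have "prob {\<omega>\<in>space M. Y \<omega> > t} \<le> exp (h t1) * exp (- (1 - e) * h t)" if t: "t \<ge> 0" for t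
  proof (cases "t \<ge> t0")
    case True
    then show ?thesis using t0[of t] h_nonneg[of t1] unfolding t1_def
      by (smt (verit) exp_ge_zero mult_le_cancel_right1 one_le_exp_iff)
  next
    case False
    then have "h t \<le> h t1"
      using concave_on_nonneg_mono[OF h_concave h_nonneg t] unfolding t1_def by simp
    moreover have "(1 - e) * h t \<le> h t" using e h_nonneg[OF t] by (simp add: algebra_simps)
    ultimately have "1 \<le> exp (h t1 - (1 - e) * h t)" by simp
    also have "\<dots> = exp (h t1) * exp (- (1 - e) * h t)" by (simp add: exp_add[symmetric] algebra_simps)
    finally show ?thesis using prob_le_1 by (rule order_trans[rotated])
  qed
  moreover have "exp (h t1) \<ge> 1" using h_nonneg[of t1] unfolding t1_def by simp
  ultimately show ?thesis by blast
qed

lemma exists_scale_div_less: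
  assumes \<alpha>: "\<alpha> > 0"
  shows "\<exists>x>0. h x / x < \<alpha>"
proof (rule ccontr)
  assume none: "\<not> ?thesis"
  have h_ge: "\<alpha> * x \<le> h x" if x: "x > 0" for x
  proof -
    have "\<alpha> \<le> h x / x" using none x by (meson not_le)
    then show ?thesis using x by (simp add: pos_le_divide_eq)
  qed
  obtain C where C: "C \<ge> 1" "\<And>t. t \<ge> 0 \<Longrightarrow> prob {\<omega>\<in>space M. Y \<omega> > t} \<le> C * exp (- (1 - 1/2) * h t)"
    using tail_prob_le_uniform[of "1/2"] by auto
  \<comment> \<open>a linear lower bound on h makes the tail exponentially small, so Y would be light-tailed\<close>
  have tail: "prob {\<omega>\<in>space M. Y \<omega> > t} \<le> C * exp (- 2 * (\<alpha> / 4) * t)" if t: "t > 0" for t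
  proof -
    have "exp (- (1 - 1/2) * h t) \<le> exp (- 2 * (\<alpha> / 4) * t)" using h_ge[OF t] by simp
    then show ?thesis using C(2)[of t] C(1) t by (smt (verit) mult_left_mono)
  qed
  have "(\<integral>\<^sup>+\<omega>. ennreal (exp (\<alpha> / 4 * Y \<omega>)) \<partial>M) < \<infinity>"
    using \<alpha> C by (intro nn_integral_exp_finite_if_exponential_tail[OF Y_measurable _ _ tail]) auto
  moreover have "(\<integral>\<^sup>+\<omega>. ennreal (exp (\<alpha> / 4 * Y \<omega>)) \<partial>M) = \<infinity>"
    using heavy_tailed \<alpha> unfolding heavy_tailed_def by (metis zero_less_divide_iff zero_less_numeral)
  ultimately show False by simp
qed

lemma eventually_scale_div_less:
  assumes "\<alpha> > 0"
  shows "eventually (\<lambda>x. h x / x < \<alpha>) at_top"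
proof -
  obtain x1 where x1: "x1 > 0" "h x1 / x1 < \<alpha>" using exists_scale_div_less[OF assms] by blast
  have "h x / x < \<alpha>" if x: "x \<ge> x1" for x
  proof -
    have "x1 / x * h x \<le> h x1" using concave_on_scaled_le[OF h_concave h_zero, of x1 x] x x1 by auto
    then have "h x / x \<le> h x1 / x1" using x x1 by (simp add: field_simps)
    then show ?thesis using x1 by simp
  qed
  then show ?thesis unfolding eventually_at_top_linorder by blast
qed

lemma truncated_exp_increment_tail_le:
  assumes e: "0 < e" "e < 1" and C: "C \<ge> 0"
    and tail: "\<And>t. t \<ge> 0 \<Longrightarrow> prob {\<omega>\<in>space M. Y \<omega> > t} \<le> C * exp (- (1 - e/4) * h t)"
    and x: "x > 0" and t: "t > 0"
  defines "\<mu> \<equiv> h x / x"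
  shows "(exp ((1 - e) * \<mu> * min (t + 1) x) - exp ((1 - e) * \<mu> * min t x)) * prob {\<omega>\<in>space M. Y \<omega> > t}
    \<le> C * (exp ((1 - e) * \<mu>) - 1) * (exp (- (e/2) * \<mu> * t) * exp (- (e/4) * h t))"
proof -
  define \<theta> where "\<theta> = (1 - e) * \<mu>"
  have \<mu>: "\<mu> \<ge> 0" unfolding \<mu>_def using h_nonneg[of x] x by simp
  then have \<theta>: "\<theta> \<ge> 0" unfolding \<theta>_def using e by simp
  have D: "0 \<le> C * (exp \<theta> - 1)" using C \<theta> by simp
  show ?thesis
  proof (cases "t < x")
    case False
    then show ?thesis using D unfolding \<theta>_def[symmetric] by (simp add: min_def)
  next
    case True
    have "\<theta> * min (t + 1) x \<le> \<theta> * (t + 1)" using \<theta> by (intro mult_left_mono) auto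
    then have "exp (\<theta> * min (t + 1) x) - exp (\<theta> * min t x) \<le> exp (\<theta> * t) * (exp \<theta> - 1)"
      using True by (simp add: min_def algebra_simps exp_add[symmetric])
    then have "(exp (\<theta> * min (t + 1) x) - exp (\<theta> * min t x)) * prob {\<omega>\<in>space M. Y \<omega> > t}
        \<le> exp (\<theta> * t) * (exp \<theta> - 1) * (C * exp (- (1 - e/4) * h t))"
      using tail[of t] t \<theta> by (intro mult_mono) auto
    also have "\<dots> = C * (exp \<theta> - 1) * exp (\<theta> * t - (1 - e/4) * h t)"
      by (simp add: algebra_simps exp_add[symmetric])
    also have "\<dots> \<le> C * (exp \<theta> - 1) * (exp (- (e/2) * \<mu> * t) * exp (- (e/4) * h t))"
    proof -
      have "t / x * h x \<le> h t" using concave_on_scaled_le[OF h_concave h_zero, of t x] True t by auto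
      then have "\<mu> * t \<le> h t" unfolding \<mu>_def by (simp add: field_simps)
      then have "(1 - e/2) * (\<mu> * t) \<le> (1 - e/2) * h t" using e by (intro mult_left_mono) auto
      then have "\<theta> * t - (1 - e/4) * h t \<le> - (e/2) * \<mu> * t + - (e/4) * h t"
        unfolding \<theta>_def by (simp add: algebra_simps)
      then have "exp (\<theta> * t - (1 - e/4) * h t) \<le> exp (- (e/2) * \<mu> * t) * exp (- (e/4) * h t)"
        by (simp only: exp_add[symmetric] exp_le_cancel_iff)
      then show ?thesis using D by (rule mult_left_mono)
    qed
    finally show ?thesis unfolding \<theta>_def .
  qed
qed

lemma truncated_mgf_increment_le:
  fixes L k :: nat
  assumes e: "0 < e" "e < 1" and C: "C \<ge> 0"
    and tail: "\<And>t. t \<ge> 0 \<Longrightarrow> prob {\<omega>\<in>space M. Y \<omega> > t} \<le> C * exp (- (1 - e/4) * h t)"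
    and x: "x \<ge> 1"
  defines "\<theta> \<equiv> (1 - e) * (h x / x)" and "q \<equiv> exp (- (e/2) * (h x / x))"
    and "\<eta> \<equiv> exp (- (e/4) * h (real L))"
  shows "ennreal (exp (\<theta> * min (real k + 2) x) - exp (\<theta> * min (real k + 1) x))
      * ennreal (prob {\<omega>\<in>space M. Y \<omega> > real k + 1})
    \<le> ennreal (C * (exp \<theta> - 1) * (if k < L then 1 else 0)) + ennreal (C * (exp \<theta> - 1) * \<eta> * q ^ Suc k)"
proof -
  define t where "t = real k + 1"
  define D where "D = C * (exp \<theta> - 1)"
  have \<theta>: "\<theta> \<ge> 0" unfolding \<theta>_def using e x h_nonneg[of x] by simp
  have D: "D \<ge> 0" using C \<theta> unfolding D_def by simp
  have q: "0 \<le> q" "q \<le> 1" using e x h_nonneg[of x] unfolding q_def by auto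
  have "(exp (\<theta> * min (t + 1) x) - exp (\<theta> * min t x)) * prob {\<omega>\<in>space M. Y \<omega> > t}
      \<le> D * (exp (- (e/2) * (h x / x) * t) * exp (- (e/4) * h t))"
    using truncated_exp_increment_tail_le[OF e C tail, of x t] x unfolding D_def \<theta>_def t_def by simp
  also have "exp (- (e/2) * (h x / x) * t) = q ^ Suc k"
  proof -
    have "- (e/2) * (h x / x) * t = real (Suc k) * (- (e/2) * (h x / x))" unfolding t_def by (simp add: algebra_simps)
    then show ?thesis unfolding q_def by (simp only: exp_of_nat_mult)
  qed
  \<comment> \<open>the first L increments are bounded trivially, the later ones decay geometrically\<close>
  also have "D * (q ^ Suc k * exp (- (e/4) * h t)) \<le> D * (if k < L then 1 else 0) + D * \<eta> * q ^ Suc k"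
  proof (cases "k < L")
    case True
    have "q ^ Suc k * exp (- (e/4) * h t) \<le> 1"
      using q e h_nonneg[of t] unfolding t_def by (intro mult_le_one power_le_one) auto
    then have "D * (q ^ Suc k * exp (- (e/4) * h t)) \<le> D" using D by (rule mult_left_le)
    moreover have "0 \<le> D * \<eta> * q ^ Suc k" using D q unfolding \<eta>_def by simp
    ultimately show ?thesis using True by simp
  next
    case False
    then have "h (real L) \<le> h t"
      unfolding t_def by (intro concave_on_nonneg_mono[OF h_concave h_nonneg]) auto
    then have "exp (- (e/4) * h t) \<le> \<eta>" unfolding \<eta>_def using e by simp
    then have "D * (q ^ Suc k * exp (- (e/4) * h t)) \<le> D * (q ^ Suc k * \<eta>)"
      using D q by (intro mult_left_mono) auto
    then show ?thesis using False by (simp add: algebra_simps)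
  qed
  finally have "(exp (\<theta> * min (t + 1) x) - exp (\<theta> * min t x)) * prob {\<omega>\<in>space M. Y \<omega> > t}
      \<le> D * (if k < L then 1 else 0) + D * \<eta> * q ^ Suc k" .
  moreover have "0 \<le> exp (\<theta> * min (t + 1) x) - exp (\<theta> * min t x)"
    using \<theta> by (simp add: mult_left_mono)
  moreover have "0 \<le> D * \<eta> * q ^ Suc k" using D q unfolding \<eta>_def by simp
  ultimately show ?thesis using D unfolding t_def D_def
    by (simp add: ennreal_mult[symmetric] ennreal_plus[symmetric] ennreal_leI add.commute del: ennreal_plus)
qed

lemma truncated_mgf_le:
  fixes L :: nat
  assumes e: "0 < e" "e < 1" and C: "C \<ge> 0"
    and tail: "\<And>t. t \<ge> 0 \<Longrightarrow> prob {\<omega>\<in>space M. Y \<omega> > t} \<le> C * exp (- (1 - e/4) * h t)"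
    and x: "x \<ge> 1" and hx: "h x > 0"
  defines "\<theta> \<equiv> (1 - e) * (h x / x)"
  shows "(\<integral>\<^sup>+\<omega>. ennreal (exp (\<theta> * min (Y \<omega>) x)) \<partial>M)
     \<le> ennreal (exp \<theta> * (1 + C * \<theta> * real L + C * exp (- (e/4) * h (real L)) * (2 / e)))"
proof -
  define \<mu> where "\<mu> = h x / x"
  have \<mu>: "\<mu> > 0" using hx x unfolding \<mu>_def by simp
  have \<theta>: "\<theta> = (1 - e) * \<mu>" unfolding \<theta>_def \<mu>_def ..
  then have \<theta>_nonneg: "\<theta> \<ge> 0" using e \<mu> by simp
  define g where "g y = exp (\<theta> * min y x)" for y
  define \<eta> where "\<eta> = exp (- (e/4) * h (real L))"
  define q where "q = exp (- (e/2) * \<mu>)"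
  define D where "D = C * (exp \<theta> - 1)"
  have D: "D \<ge> 0" using C \<theta>_nonneg unfolding D_def by simp
  have q: "0 \<le> q" "q < 1" using e \<mu> unfolding q_def by auto
  have g_mono: "mono g" unfolding g_def mono_def using \<theta>_nonneg by (auto intro!: mult_left_mono)
  have increment: "ennreal (g (real k + 2) - g (real k + 1)) * ennreal (prob {\<omega>\<in>space M. Y \<omega> > real k + 1})
      \<le> ennreal (D * (if k < L then 1 else 0)) + ennreal (D * \<eta> * q ^ Suc k)" for k
    using truncated_mgf_increment_le[OF e C tail x, of k L]
    unfolding g_def D_def \<eta>_def q_def \<theta>_def \<mu>_def .
  have finite_part: "(\<Sum>k. ennreal (D * (if k < L then 1 else 0))) = ennreal (D * real L)"
  proof -
    have "(\<Sum>k. ennreal (D * (if k < L then 1 else 0))) = (\<Sum>k<L. ennreal D)"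
      by (subst suminf_finite[of "{..<L}"]) auto
    then show ?thesis using D by (simp add: ennreal_mult ennreal_of_nat_eq_real_of_nat mult.commute)
  qed
  have geometric_part: "(\<Sum>k. ennreal (D * \<eta> * q ^ Suc k)) = ennreal (D * \<eta> * q / (1 - q))"
    using D q unfolding \<eta>_def by (intro suminf_ennreal_geometric_Suc) auto
  have "(\<integral>\<^sup>+\<omega>. ennreal (g (Y \<omega>)) \<partial>M) \<le> ennreal (g 1) +
     (\<Sum>k. ennreal (g (real k + 2) - g (real k + 1)) * ennreal (prob {\<omega>\<in>space M. Y \<omega> > real k + 1}))"
    by (rule nn_integral_mono_le_tail_sum[OF Y_measurable g_mono]) (simp add: g_def)
  also have "\<dots> \<le> ennreal (g 1) + (\<Sum>k. ennreal (D * (if k < L then 1 else 0)) + ennreal (D * \<eta> * q ^ Suc k))"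
    by (intro add_left_mono suminf_le increment) auto
  also have "\<dots> = ennreal (g 1) + (ennreal (D * real L) + ennreal (D * \<eta> * q / (1 - q)))"
    unfolding finite_part[symmetric] geometric_part[symmetric] by (subst suminf_add) auto
  also have "\<dots> = ennreal (g 1 + D * real L + D * \<eta> * q / (1 - q))"
    using D q unfolding g_def \<eta>_def by (simp add: ennreal_plus add.assoc)
  also have "\<dots> \<le> ennreal (exp \<theta> * (1 + C * \<theta> * real L + C * \<eta> * (2 / e)))"
    using truncated_mgf_sum_le[OF e \<mu> C, of \<eta> L] x unfolding \<theta>(1)[symmetric] q_def D_def g_def \<eta>_def
    by (intro ennreal_leI) (simp add: algebra_simps min_def)
  finally show ?thesis unfolding g_def \<eta>_def .
qed

lemma eventually_truncated_mgf_le_exp: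
  assumes s: "s > 0" and e: "0 < e" "e < 1"
  shows "eventually (\<lambda>x. (\<integral>\<^sup>+\<omega>. ennreal (exp ((1 - e) * (h x / x) * min (Y \<omega>) x)) \<partial>M)
    \<le> ennreal (exp s)) at_top"
proof -
  obtain C where C: "C \<ge> 1" "\<And>t. t \<ge> 0 \<Longrightarrow> prob {\<omega>\<in>space M. Y \<omega> > t} \<le> C * exp (- (1 - e/4) * h t)"
    using tail_prob_le_uniform[of "e/4"] e by auto
  define d where "d = exp (s/2) - 1"
  have d: "d > 0" unfolding d_def using s by simp
  obtain L :: nat where "exp (- (e/4) * h (real L)) \<le> d * e / (4 * C)"
    using exists_nat_exp_neg_le[OF h_at_top, of "e/4" "d * e / (4 * C)"] e d C by auto
  then have "C * exp (- (e/4) * h (real L)) * (2 / e) \<le> C * (d * e / (4 * C)) * (2 / e)"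
    using C e by (intro mult_right_mono mult_left_mono) auto
  also have "\<dots> = d / 2" using C e by (simp add: field_simps)
  finally have L: "C * exp (- (e/4) * h (real L)) * (2 / e) \<le> d / 2" .
  define \<beta> where "\<beta> = min (s/2) (d / (2 * C * (real L + 1)))"
  have \<beta>: "\<beta> > 0" unfolding \<beta>_def using s d C by auto
  have "eventually (\<lambda>x. h x > 0) at_top" using h_at_top filterlim_at_top_dense by blast
  with eventually_scale_div_less[OF \<beta>] eventually_ge_at_top[of 1] show ?thesis
  proof eventually_elim
    case (elim x)
    then have x: "x \<ge> 1" and hx: "h x > 0" and small: "h x / x < \<beta>" by auto
    define \<theta> where "\<theta> = (1 - e) * (h x / x)"
    have hx_div: "0 \<le> h x / x" using hx x by simp
    have \<theta>: "0 \<le> \<theta>" "\<theta> \<le> h x / x" unfolding \<theta>_def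
      using mult_nonneg_nonneg[OF _ hx_div, of "1 - e"] mult_left_le_one_le[OF hx_div, of "1 - e"] e
      by auto
    have pos: "2 * C * (real L + 1) > 0" using C by simp
    have "\<theta> < d / (2 * C * (real L + 1))" using \<theta>(2) small unfolding \<beta>_def by simp
    then have "\<theta> * (2 * C * (real L + 1)) < d" using pos_less_divide_eq[OF pos] by blast
    moreover have "C * \<theta> * real L \<le> C * \<theta> * (real L + 1)" using C \<theta> by (intro mult_left_mono) auto
    moreover have "\<theta> * (2 * C * (real L + 1)) = 2 * (C * \<theta> * (real L + 1))" by (simp add: algebra_simps)
    ultimately have "C * \<theta> * real L \<le> d / 2" by linarith
    then have "1 + C * \<theta> * real L + C * exp (- (e/4) * h (real L)) * (2 / e) \<le> exp (s/2)"
      using L unfolding d_def by argo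
    moreover have "\<theta> \<le> s/2" using \<theta>(2) small min.cobounded1[of "s/2"] unfolding \<beta>_def by linarith
    then have "exp \<theta> \<le> exp (s/2)" by simp
    moreover have "0 \<le> 1 + C * \<theta> * real L + C * exp (- (e/4) * h (real L)) * (2 / e)"
      using C \<theta> e by (intro add_nonneg_nonneg mult_nonneg_nonneg) auto
    ultimately have "exp \<theta> * (1 + C * \<theta> * real L + C * exp (- (e/4) * h (real L)) * (2 / e))
        \<le> exp (s/2) * exp (s/2)"
      by (intro mult_mono) auto
    also have "\<dots> = exp s" by (simp add: exp_add[symmetric])
    finally show ?case
      using truncated_mgf_le[OF e _ C(2) x hx, of L] C unfolding \<theta>_def
      by (meson ennreal_leI order_trans zero_le_one order.trans)
  qed
qed

end

section \<open>Random sums\<close>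

locale random_sum = prob_space +
  fixes X :: "nat \<Rightarrow> 'a \<Rightarrow> real" and N :: "'a \<Rightarrow> nat" and h :: "real \<Rightarrow> real"
  assumes indep: "indep_vars (\<lambda>_. borel) (\<lambda>i \<omega>. if i = 0 then real (N \<omega>) else X i \<omega>) UNIV"
    and ident: "\<And>i. i \<ge> 1 \<Longrightarrow> distr M borel (X i) = distr M borel (X 1)"
    and N_pos: "\<And>\<omega>. \<omega> \<in> space M \<Longrightarrow> N \<omega> \<ge> 1"
    and N_light: "light_tailed M (\<lambda>\<omega>. real (N \<omega>))"
    and scale: "natural_scale M (X 1) h"
begin

definition Z :: "nat \<Rightarrow> 'a \<Rightarrow> real" where
  "Z i \<omega> = (if i = 0 then real (N \<omega>) else X i \<omega>)"

definition S :: "'a \<Rightarrow> real" where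
  "S \<omega> = (\<Sum>k=1..N \<omega>. X k \<omega>)"

lemma indep_Z: "indep_vars (\<lambda>_. borel) Z UNIV"
  using indep unfolding Z_def .

lemma Z_measurable: "Z i \<in> borel_measurable M"
  using indep_Z unfolding indep_vars_def by auto

lemma X_measurable[measurable]: "i \<ge> 1 \<Longrightarrow> X i \<in> borel_measurable M"
  using Z_measurable[of i] unfolding Z_def by (simp cong: measurable_cong)

lemma X1_measurable[measurable]: "X 1 \<in> borel_measurable M"
  by (rule X_measurable) simp

lemma real_N_measurable[measurable]: "(\<lambda>\<omega>. real (N \<omega>)) \<in> borel_measurable M"
  using Z_measurable[of 0] unfolding Z_def by simp

lemma N_measurable[measurable]: "N \<in> measurable M (count_space UNIV)"
proof (subst measurable_count_space_eq2_countable, intro conjI ballI)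
  fix n :: nat
  have "N -` {n} \<inter> space M = {\<omega>\<in>space M. real (N \<omega>) = real n}" by auto
  also have "\<dots> \<in> sets M" by measurable
  finally show "N -` {n} \<inter> space M \<in> sets M" .
qed auto

lemma S_measurable[measurable]: "S \<in> borel_measurable M"
proof -
  have "(\<lambda>\<omega>. (\<lambda>n \<omega>. \<Sum>k=1..n. X k \<omega>) (N \<omega>) \<omega>) \<in> borel_measurable M"
    by (rule measurable_compose_countable[OF _ N_measurable]) auto
  then show ?thesis unfolding S_def by simp
qed

sublocale natural_scale_rv M "X 1" h
proof unfold_locales
  show "X 1 \<in> borel_measurable M" by (rule X1_measurable)
  show "natural_scale M (X 1) h" by (rule scale)
qed

lemma prob_X_eq:
  assumes i: "i \<ge> 1" and A: "A \<in> sets borel"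
  shows "prob {\<omega>\<in>space M. X i \<omega> \<in> A} = prob {\<omega>\<in>space M. X 1 \<omega> \<in> A}"
proof -
  have "prob {\<omega>\<in>space M. X i \<omega> \<in> A} = measure (distr M borel (X i)) A"
    using A i by (subst measure_distr) (auto simp: vimage_def Int_def conj_commute)
  also have "\<dots> = prob {\<omega>\<in>space M. X 1 \<omega> \<in> A}"
    using A unfolding ident[OF i] by (subst measure_distr) (auto simp: vimage_def Int_def conj_commute)
  finally show ?thesis .
qed

lemma nn_integral_X_eq:
  assumes i: "i \<ge> 1" and f: "f \<in> borel_measurable borel"
  shows "(\<integral>\<^sup>+\<omega>. f (X i \<omega>) \<partial>M) = (\<integral>\<^sup>+\<omega>. f (X 1 \<omega>) \<partial>M)"
proof -
  have "(\<integral>\<^sup>+\<omega>. f (X i \<omega>) \<partial>M) = (\<integral>\<^sup>+x. f x \<partial>distr M borel (X i))"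
    using i f by (subst nn_integral_distr) auto
  also have "\<dots> = (\<integral>\<^sup>+\<omega>. f (X 1 \<omega>) \<partial>M)"
    using f unfolding ident[OF i] by (subst nn_integral_distr) auto
  finally show ?thesis .
qed

lemma nn_integral_N_prod_X:
  fixes f0 f :: "real \<Rightarrow> ennreal"
  assumes J: "finite J" "0 \<notin> J"
    and f0: "f0 \<in> borel_measurable borel" and f: "f \<in> borel_measurable borel"
  shows "(\<integral>\<^sup>+\<omega>. f0 (real (N \<omega>)) * (\<Prod>i\<in>J. f (X i \<omega>)) \<partial>M) =
     (\<integral>\<^sup>+\<omega>. f0 (real (N \<omega>)) \<partial>M) * (\<integral>\<^sup>+\<omega>. f (X 1 \<omega>) \<partial>M) ^ card J"
proof -
  define g where "g i = (if i = (0::nat) then f0 else f)" for i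
  have ind: "indep_vars (\<lambda>_. borel) (\<lambda>i \<omega>. g i (Z i \<omega>)) (insert 0 J)"
    by (rule indep_vars_compose2[OF indep_vars_subset[OF indep_Z]]) (auto simp: g_def f0 f)
  have "(\<integral>\<^sup>+\<omega>. f0 (real (N \<omega>)) * (\<Prod>i\<in>J. f (X i \<omega>)) \<partial>M) =
        (\<integral>\<^sup>+\<omega>. (\<Prod>i\<in>insert 0 J. g i (Z i \<omega>)) \<partial>M)"
    using J by (intro nn_integral_cong) (auto simp: g_def Z_def intro!: arg_cong2[where f="(*)"] prod.cong)
  also have "\<dots> = (\<Prod>i\<in>insert 0 J. \<integral>\<^sup>+\<omega>. g i (Z i \<omega>) \<partial>M)"
    by (rule indep_vars_nn_integral) (use J ind in auto)
  also have "\<dots> = (\<integral>\<^sup>+\<omega>. f0 (real (N \<omega>)) \<partial>M) * (\<Prod>i\<in>J. \<integral>\<^sup>+\<omega>. f (X i \<omega>) \<partial>M)"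
    using J by (auto simp: g_def Z_def intro!: arg_cong2[where f="(*)"] prod.cong)
  also have "(\<Prod>i\<in>J. \<integral>\<^sup>+\<omega>. f (X i \<omega>) \<partial>M) = (\<Prod>i\<in>J. \<integral>\<^sup>+\<omega>. f (X 1 \<omega>) \<partial>M)"
  proof (rule prod.cong)
    fix i assume "i \<in> J"
    then have "i \<ge> 1" using J by (cases i) auto
    then show "(\<integral>\<^sup>+\<omega>. f (X i \<omega>) \<partial>M) = (\<integral>\<^sup>+\<omega>. f (X 1 \<omega>) \<partial>M)" by (rule nn_integral_X_eq[OF _ f])
  qed simp
  finally show ?thesis by simp
qed

lemma nn_integral_indicator_N:
  "(\<integral>\<^sup>+\<omega>. indicator {real n} (real (N \<omega>)) \<partial>M) = emeasure M {\<omega>\<in>space M. N \<omega> = n}"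
proof -
  have "(\<integral>\<^sup>+\<omega>. indicator {real n} (real (N \<omega>)) \<partial>M) = (\<integral>\<^sup>+\<omega>. indicator {\<omega>\<in>space M. N \<omega> = n} \<omega> \<partial>M)"
    by (rule nn_integral_cong) (simp add: indicator_def)
  then show ?thesis by simp
qed

lemma exists_prob_N_eq_pos: "\<exists>n\<ge>1. prob {\<omega>\<in>space M. N \<omega> = n} > 0"
proof (rule ccontr)
  assume none: "\<not> ?thesis"
  then have "emeasure M {\<omega>\<in>space M. N \<omega> = n} = 0" for n
  proof (cases "n \<ge> 1")
    case True
    then show ?thesis using none by (simp add: emeasure_eq_measure not_less measure_le_0_iff)
  next
    case False
    then have "{\<omega>\<in>space M. N \<omega> = n} = {}" using N_pos by fastforce
    then show ?thesis by (metis emeasure_empty)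
  qed
  then have "emeasure M (\<Union>n. {\<omega>\<in>space M. N \<omega> = n}) = 0"
    by (intro emeasure_UN_eq_0) auto
  moreover have "(\<Union>n. {\<omega>\<in>space M. N \<omega> = n}) = space M" by auto
  ultimately show False using emeasure_space_1 by simp
qed

lemma S_gt_shift:
  assumes n: "n \<ge> 1" and N\<omega>: "N \<omega> = n" and X1: "X 1 \<omega> > y" and Xi: "\<And>i. i \<in> {2..n} \<Longrightarrow> X i \<omega> > - c"
  shows "S \<omega> > y - real (n - 1) * c"
proof -
  have "(\<Sum>k=2..n. - c) \<le> (\<Sum>k=2..n. X k \<omega>)" using Xi by (intro sum_mono) (simp add: less_imp_le)
  moreover have "S \<omega> = X 1 \<omega> + (\<Sum>k=2..n. X k \<omega>)"
    unfolding S_def N\<omega> using n by (simp add: sum.atLeast_Suc_atMost numeral_2_eq_2)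
  ultimately show ?thesis using X1 n by (auto simp: algebra_simps of_nat_diff)
qed

lemma prob_S_gt_shift_ge:
  assumes n: "n \<ge> 1"
  shows "prob {\<omega>\<in>space M. N \<omega> = n} * prob {\<omega>\<in>space M. X 1 \<omega> > - c} ^ (n - 1)
      * prob {\<omega>\<in>space M. X 1 \<omega> > y} \<le> prob {\<omega>\<in>space M. S \<omega> > y - real (n - 1) * c}"
proof -
  define A where "A i = (if i = 0 then {real n} else if i = 1 then {y<..} else {-c<..})" for i :: nat
  define E where "E = (\<Inter>i\<in>{0..n}. Z i -` A i \<inter> space M)"
  have "prob E = (\<Prod>i\<in>{0..n}. prob (Z i -` A i \<inter> space M))"
    unfolding E_def by (rule indep_varsD[OF indep_Z]) (auto simp: A_def)
  also have "{0..n} = insert 0 (insert 1 {2..n})" using n by auto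
  also have "(\<Prod>i\<in>insert 0 (insert 1 {2..n}). prob (Z i -` A i \<inter> space M)) =
      prob (Z 0 -` A 0 \<inter> space M) * (prob (Z 1 -` A 1 \<inter> space M) * (\<Prod>i\<in>{2..n}. prob (Z i -` A i \<inter> space M)))"
    by simp
  also have "prob (Z 0 -` A 0 \<inter> space M) = prob {\<omega>\<in>space M. N \<omega> = n}"
    unfolding A_def Z_def by (auto intro!: arg_cong[where f=prob])
  also have "prob (Z 1 -` A 1 \<inter> space M) = prob {\<omega>\<in>space M. X 1 \<omega> > y}"
    unfolding A_def Z_def by (auto intro!: arg_cong[where f=prob])
  also have "(\<Prod>i\<in>{2..n}. prob (Z i -` A i \<inter> space M)) = (\<Prod>i\<in>{2..n}. prob {\<omega>\<in>space M. X 1 \<omega> > - c})"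
  proof (rule prod.cong)
    fix i assume i: "i \<in> {2..n}"
    have "prob (Z i -` A i \<inter> space M) = prob {\<omega>\<in>space M. X i \<omega> \<in> {-c<..}}"
      using i unfolding A_def Z_def by (auto intro!: arg_cong[where f=prob])
    also have "\<dots> = prob {\<omega>\<in>space M. X 1 \<omega> \<in> {-c<..}}" using i by (intro prob_X_eq) auto
    finally show "prob (Z i -` A i \<inter> space M) = prob {\<omega>\<in>space M. X 1 \<omega> > - c}" by simp
  qed simp
  finally have "prob E = prob {\<omega>\<in>space M. N \<omega> = n} * prob {\<omega>\<in>space M. X 1 \<omega> > - c} ^ (n - 1)
      * prob {\<omega>\<in>space M. X 1 \<omega> > y}"
    using n by (simp add: algebra_simps)
  moreover have "E \<subseteq> {\<omega>\<in>space M. S \<omega> > y - real (n - 1) * c}"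
  proof
    fix \<omega> assume "\<omega> \<in> E"
    then have mem: "\<And>i. i \<in> {0..n} \<Longrightarrow> Z i \<omega> \<in> A i" and \<omega>: "\<omega> \<in> space M"
      unfolding E_def by auto
    have "S \<omega> > y - real (n - 1) * c"
    proof (rule S_gt_shift[OF n])
      show "N \<omega> = n" using mem[of 0] by (simp add: Z_def A_def)
      show "X 1 \<omega> > y" using mem[of 1] n by (simp add: Z_def A_def)
      show "X i \<omega> > - c" if "i \<in> {2..n}" for i using mem[of i] that by (simp add: Z_def A_def)
    qed
    then show "\<omega> \<in> {\<omega>\<in>space M. S \<omega> > y - real (n - 1) * c}" using \<omega> by simp
  qed
  then have "prob E \<le> prob {\<omega>\<in>space M. S \<omega> > y - real (n - 1) * c}"
    by (intro finite_measure_mono) auto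
  ultimately show ?thesis by simp
qed

lemma exists_prob_S_gt_shift_ge:
  "\<exists>c K. c \<ge> 0 \<and> K > 0 \<and> (\<forall>y. K * prob {\<omega>\<in>space M. X 1 \<omega> > y} \<le> prob {\<omega>\<in>space M. S \<omega> > y - c})"
proof -
  obtain n where n: "n \<ge> 1" "prob {\<omega>\<in>space M. N \<omega> = n} > 0" using exists_prob_N_eq_pos by blast
  obtain c where c: "c \<ge> 0" "prob {\<omega>\<in>space M. X 1 \<omega> > - c} > 0"
    using exists_prob_gt_neg_pos[OF X1_measurable] by blast
  define K where "K = prob {\<omega>\<in>space M. N \<omega> = n} * prob {\<omega>\<in>space M. X 1 \<omega> > - c} ^ (n - 1)"
  have "K > 0" using n c unfolding K_def by simp
  moreover have "real (n - 1) * c \<ge> 0" using c by simp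
  ultimately show ?thesis using prob_S_gt_shift_ge[OF n(1), of c] unfolding K_def by blast
qed

lemma heavy_tailed_S: "heavy_tailed M S"
  unfolding heavy_tailed_def
proof (intro allI impI)
  fix s :: real assume s: "s > 0"
  obtain n where n: "n \<ge> 1" "prob {\<omega>\<in>space M. N \<omega> = n} > 0" using exists_prob_N_eq_pos by blast
  \<comment> \<open>on the event N = n, exp (s S) is a product of n independent copies of exp (s X 1)\<close>
  have "(\<integral>\<^sup>+\<omega>. indicator {real n} (real (N \<omega>)) * (\<Prod>i\<in>{1..n}. ennreal (exp (s * X i \<omega>))) \<partial>M) \<le>
        (\<integral>\<^sup>+\<omega>. ennreal (exp (s * S \<omega>)) \<partial>M)"
  proof (rule nn_integral_mono)
    fix \<omega>
    show "indicator {real n} (real (N \<omega>)) * (\<Prod>i\<in>{1..n}. ennreal (exp (s * X i \<omega>))) \<le> ennreal (exp (s * S \<omega>))"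
    proof (cases "N \<omega> = n")
      case True
      have "exp (s * S \<omega>) = (\<Prod>i\<in>{1..n}. exp (s * X i \<omega>))"
        unfolding S_def True by (simp add: sum_distrib_left exp_sum)
      then show ?thesis using True by (simp add: prod_ennreal)
    qed simp
  qed
  moreover have "(\<integral>\<^sup>+\<omega>. indicator {real n} (real (N \<omega>)) * (\<Prod>i\<in>{1..n}. ennreal (exp (s * X i \<omega>))) \<partial>M) =
      emeasure M {\<omega>\<in>space M. N \<omega> = n} * (\<integral>\<^sup>+\<omega>. ennreal (exp (s * X 1 \<omega>)) \<partial>M) ^ n"
    using nn_integral_N_prod_X[of "{1..n}" "indicator {real n}" "\<lambda>x. ennreal (exp (s * x))"]
    by (simp add: nn_integral_indicator_N)
  moreover have "(\<integral>\<^sup>+\<omega>. ennreal (exp (s * X 1 \<omega>)) \<partial>M) = \<infinity>"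
    using heavy_tailed s unfolding heavy_tailed_def by auto
  moreover have "emeasure M {\<omega>\<in>space M. N \<omega> = n} \<noteq> 0" using n by (simp add: emeasure_eq_measure)
  ultimately show "(\<integral>\<^sup>+\<omega>. ennreal (exp (s * S \<omega>)) \<partial>M) = \<infinity>"
    using n by (simp add: ennreal_mult_eq_top_iff top_unique)
qed

lemma nn_integral_split_N:
  fixes f :: "nat \<Rightarrow> 'a \<Rightarrow> ennreal"
  assumes f: "\<And>n. f n \<in> borel_measurable M"
  shows "(\<integral>\<^sup>+\<omega>. f (N \<omega>) \<omega> \<partial>M) = (\<Sum>n. \<integral>\<^sup>+\<omega>. indicator {real n} (real (N \<omega>)) * f n \<omega> \<partial>M)"
proof -
  have "f (N \<omega>) \<omega> = (\<Sum>n. indicator {real n} (real (N \<omega>)) * f n \<omega>)" for \<omega>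
  proof -
    have "(\<Sum>n. indicator {real n} (real (N \<omega>)) * f n \<omega>) = (\<Sum>n\<in>{N \<omega>}. indicator {real n} (real (N \<omega>)) * f n \<omega>)"
      by (rule suminf_finite) (auto simp: indicator_def)
    then show ?thesis by simp
  qed
  then have "(\<integral>\<^sup>+\<omega>. f (N \<omega>) \<omega> \<partial>M) = (\<integral>\<^sup>+\<omega>. (\<Sum>n. indicator {real n} (real (N \<omega>)) * f n \<omega>) \<partial>M)"
    by simp
  also have "\<dots> = (\<Sum>n. \<integral>\<^sup>+\<omega>. indicator {real n} (real (N \<omega>)) * f n \<omega> \<partial>M)"
    by (rule nn_integral_suminf) (use f in measurable)
  finally show ?thesis .
qed

lemma nn_integral_exp_N:
  "(\<integral>\<^sup>+\<omega>. ennreal (exp (s * real (N \<omega>))) \<partial>M) =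
    (\<Sum>n. emeasure M {\<omega>\<in>space M. N \<omega> = n} * ennreal (exp (s * real n)))"
proof -
  have "(\<integral>\<^sup>+\<omega>. ennreal (exp (s * real (N \<omega>))) \<partial>M) =
      (\<Sum>n. \<integral>\<^sup>+\<omega>. indicator {real n} (real (N \<omega>)) * ennreal (exp (s * real n)) \<partial>M)"
    using nn_integral_split_N[of "\<lambda>n \<omega>. ennreal (exp (s * real n))"] by simp
  also have "\<dots> = (\<Sum>n. emeasure M {\<omega>\<in>space M. N \<omega> = n} * ennreal (exp (s * real n)))"
    by (intro suminf_cong) (simp add: nn_integral_multc nn_integral_indicator_N)
  finally show ?thesis .
qed

(* Either some summand exceeds x, or truncation at x changes nothing and Markov's bound applies. *)
lemma indicator_S_gt_le:
  assumes \<theta>: "\<theta> \<ge> 0"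
  shows "indicator {\<omega>\<in>space M. S \<omega> > x} \<omega> \<le> (\<Sum>i\<in>{1..N \<omega>}. indicator {x<..} (X i \<omega>)) +
     ennreal (exp (- \<theta> * x)) * (\<Prod>i\<in>{1..N \<omega>}. ennreal (exp (\<theta> * min (X i \<omega>) x)))"
proof (cases "\<exists>i\<in>{1..N \<omega>}. X i \<omega> > x")
  case True
  then obtain i where i: "i \<in> {1..N \<omega>}" "X i \<omega> > x" by blast
  have "(1::ennreal) = indicator {x<..} (X i \<omega>)" using i by simp
  also have "\<dots> \<le> (\<Sum>i\<in>{1..N \<omega>}. indicator {x<..} (X i \<omega>))"
    by (rule member_le_sum) (use i in auto)
  finally show ?thesis by (simp add: add_increasing2 indicator_def)
next
  case False
  then have "(\<Prod>i\<in>{1..N \<omega>}. ennreal (exp (\<theta> * min (X i \<omega>) x))) = ennreal (\<Prod>i\<in>{1..N \<omega>}. exp (\<theta> * X i \<omega>))"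
    by (simp add: prod_ennreal min_def not_less)
  also have "(\<Prod>i\<in>{1..N \<omega>}. exp (\<theta> * X i \<omega>)) = exp (\<theta> * S \<omega>)"
    unfolding S_def by (simp add: sum_distrib_left exp_sum)
  finally have prod_eq: "(\<Prod>i\<in>{1..N \<omega>}. ennreal (exp (\<theta> * min (X i \<omega>) x))) = ennreal (exp (\<theta> * S \<omega>))" .
  show ?thesis
  proof (cases "S \<omega> > x")
    case True
    have "1 \<le> exp (\<theta> * (S \<omega> - x))" using \<theta> True by simp
    also have "\<dots> = exp (- \<theta> * x) * exp (\<theta> * S \<omega>)" by (simp add: exp_add[symmetric] algebra_simps)
    finally have "1 \<le> ennreal (exp (- \<theta> * x)) * ennreal (exp (\<theta> * S \<omega>))"
      by (simp add: ennreal_mult[symmetric])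
    then show ?thesis using prod_eq by (simp add: add_increasing indicator_def)
  qed simp
qed

lemma nn_integral_N_eq_chernoff:
  "(\<integral>\<^sup>+\<omega>. indicator {real n} (real (N \<omega>)) * ((\<Sum>i\<in>{1..n}. indicator {x<..} (X i \<omega>)) +
     ennreal c * (\<Prod>i\<in>{1..n}. ennreal (exp (\<theta> * min (X i \<omega>) x)))) \<partial>M)
   = of_nat n * (emeasure M {\<omega>\<in>space M. N \<omega> = n} * ennreal (prob {\<omega>\<in>space M. X 1 \<omega> > x}))
     + ennreal c * (emeasure M {\<omega>\<in>space M. N \<omega> = n} * (\<integral>\<^sup>+\<omega>. ennreal (exp (\<theta> * min (X 1 \<omega>) x)) \<partial>M) ^ n)"
proof -
  define pN where "pN = emeasure M {\<omega>\<in>space M. N \<omega> = n}"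
  have "(\<integral>\<^sup>+\<omega>. indicator {real n} (real (N \<omega>)) * ((\<Sum>i\<in>{1..n}. indicator {x<..} (X i \<omega>)) +
     ennreal c * (\<Prod>i\<in>{1..n}. ennreal (exp (\<theta> * min (X i \<omega>) x)))) \<partial>M)
    = (\<integral>\<^sup>+\<omega>. (\<Sum>i\<in>{1..n}. indicator {real n} (real (N \<omega>)) * (\<Prod>j\<in>{i}. indicator {x<..} (X j \<omega>))) +
       ennreal c * (indicator {real n} (real (N \<omega>)) * (\<Prod>i\<in>{1..n}. ennreal (exp (\<theta> * min (X i \<omega>) x)))) \<partial>M)"
    by (simp add: distrib_left sum_distrib_left mult.left_commute)
  also have "\<dots> = (\<integral>\<^sup>+\<omega>. (\<Sum>i\<in>{1..n}. indicator {real n} (real (N \<omega>)) * (\<Prod>j\<in>{i}. indicator {x<..} (X j \<omega>))) \<partial>M) +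
       (\<integral>\<^sup>+\<omega>. ennreal c * (indicator {real n} (real (N \<omega>)) * (\<Prod>i\<in>{1..n}. ennreal (exp (\<theta> * min (X i \<omega>) x)))) \<partial>M)"
    by (rule nn_integral_add; measurable)
  also have "\<dots> = (\<Sum>i\<in>{1..n}. \<integral>\<^sup>+\<omega>. indicator {real n} (real (N \<omega>)) * (\<Prod>j\<in>{i}. indicator {x<..} (X j \<omega>)) \<partial>M) +
       ennreal c * (\<integral>\<^sup>+\<omega>. indicator {real n} (real (N \<omega>)) * (\<Prod>i\<in>{1..n}. ennreal (exp (\<theta> * min (X i \<omega>) x))) \<partial>M)"
    by (subst nn_integral_sum nn_integral_cmult; measurable)+
  also have "(\<Sum>i\<in>{1..n}. \<integral>\<^sup>+\<omega>. indicator {real n} (real (N \<omega>)) * (\<Prod>j\<in>{i}. indicator {x<..} (X j \<omega>)) \<partial>M)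
      = (\<Sum>i\<in>{1..n}. pN * (\<integral>\<^sup>+\<omega>. indicator {x<..} (X 1 \<omega>) \<partial>M))"
  proof (rule sum.cong)
    fix i assume "i \<in> {1..n}"
    then show "(\<integral>\<^sup>+\<omega>. indicator {real n} (real (N \<omega>)) * (\<Prod>j\<in>{i}. indicator {x<..} (X j \<omega>)) \<partial>M)
        = pN * (\<integral>\<^sup>+\<omega>. indicator {x<..} (X 1 \<omega>) \<partial>M)"
      unfolding pN_def using nn_integral_N_prod_X[of "{i}" "indicator {real n}" "indicator {x<..}"]
      by (simp add: nn_integral_indicator_N)
  qed simp
  also have "(\<integral>\<^sup>+\<omega>. indicator {x<..} (X 1 \<omega>) \<partial>M) = emeasure M {\<omega>\<in>space M. X 1 \<omega> > x}"
  proof -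
    have "(\<integral>\<^sup>+\<omega>. indicator {x<..} (X 1 \<omega>) \<partial>M) = (\<integral>\<^sup>+\<omega>. indicator {\<omega>\<in>space M. X 1 \<omega> > x} \<omega> \<partial>M)"
      by (rule nn_integral_cong) (simp add: indicator_def)
    moreover have "{\<omega>\<in>space M. X 1 \<omega> > x} \<in> sets M" by measurable
    ultimately show ?thesis by simp
  qed
  also have "(\<integral>\<^sup>+\<omega>. indicator {real n} (real (N \<omega>)) * (\<Prod>i\<in>{1..n}. ennreal (exp (\<theta> * min (X i \<omega>) x))) \<partial>M)
      = pN * (\<integral>\<^sup>+\<omega>. ennreal (exp (\<theta> * min (X 1 \<omega>) x)) \<partial>M) ^ n"
    unfolding pN_def
    using nn_integral_N_prod_X[of "{1..n}" "indicator {real n}" "\<lambda>y. ennreal (exp (\<theta> * min y x))"]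
    by (simp add: nn_integral_indicator_N)
  finally show ?thesis unfolding pN_def by (simp add: emeasure_eq_measure)
qed

lemma nn_integral_N_eq_chernoff_le:
  assumes s: "s > 0"
    and mgf: "(\<integral>\<^sup>+\<omega>. ennreal (exp (\<theta> * min (X 1 \<omega>) x)) \<partial>M) \<le> ennreal (exp s)"
  shows "(\<integral>\<^sup>+\<omega>. indicator {real n} (real (N \<omega>)) * ((\<Sum>i\<in>{1..n}. indicator {x<..} (X i \<omega>)) +
     ennreal (exp (- \<theta> * x)) * (\<Prod>i\<in>{1..n}. ennreal (exp (\<theta> * min (X i \<omega>) x)))) \<partial>M)
   \<le> emeasure M {\<omega>\<in>space M. N \<omega> = n} * ennreal (exp (s * real n))
     * ennreal (prob {\<omega>\<in>space M. X 1 \<omega> > x} / s + exp (- \<theta> * x))"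
proof -
  define pN where "pN = emeasure M {\<omega>\<in>space M. N \<omega> = n}"
  define F where "F = prob {\<omega>\<in>space M. X 1 \<omega> > x}"
  define c where "c = exp (- \<theta> * x)"
  have F: "0 \<le> F" unfolding F_def by simp
  have c: "0 \<le> c" unfolding c_def by simp
  have "s * real n \<le> exp (s * real n)" using exp_ge_add_one_self[of "s * real n"] by linarith
  then have "real n \<le> exp (s * real n) / s" using s by (simp add: le_divide_eq algebra_simps)
  then have "real n * F \<le> exp (s * real n) / s * F" using F by (rule mult_right_mono)
  then have "real n * F \<le> exp (s * real n) * (F / s)" by simp
  then have first: "of_nat n * (pN * ennreal F) \<le> pN * ennreal (exp (s * real n) * (F / s))"
    using F by (auto simp: ennreal_mult[symmetric] ennreal_of_nat_eq_real_of_nat mult_ac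
        intro!: mult_left_mono ennreal_leI)
  have "(\<integral>\<^sup>+\<omega>. ennreal (exp (\<theta> * min (X 1 \<omega>) x)) \<partial>M) ^ n \<le> ennreal (exp s) ^ n"
    using mgf by (intro power_mono) auto
  also have "\<dots> = ennreal (exp (s * real n))"
    by (simp add: ennreal_power exp_of_nat_mult[symmetric] mult.commute)
  finally have "ennreal c * (pN * (\<integral>\<^sup>+\<omega>. ennreal (exp (\<theta> * min (X 1 \<omega>) x)) \<partial>M) ^ n)
      \<le> ennreal c * (pN * ennreal (exp (s * real n)))"
    by (intro mult_left_mono) auto
  also have "\<dots> = pN * ennreal (exp (s * real n) * c)" using c by (simp add: ennreal_mult mult_ac)
  finally have second: "ennreal c * (pN * (\<integral>\<^sup>+\<omega>. ennreal (exp (\<theta> * min (X 1 \<omega>) x)) \<partial>M) ^ n)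
      \<le> pN * ennreal (exp (s * real n) * c)" .
  have "of_nat n * (pN * ennreal F) + ennreal c * (pN * (\<integral>\<^sup>+\<omega>. ennreal (exp (\<theta> * min (X 1 \<omega>) x)) \<partial>M) ^ n)
      \<le> pN * ennreal (exp (s * real n) * (F / s)) + pN * ennreal (exp (s * real n) * c)"
    using first second by (rule add_mono)
  also have "\<dots> = pN * ennreal (exp (s * real n) * (F / s) + exp (s * real n) * c)"
    using F c s by (simp add: distrib_left ennreal_plus)
  also have "\<dots> = pN * ennreal (exp (s * real n)) * ennreal (F / s + c)"
    using F c s by (simp add: ennreal_mult[symmetric] distrib_left mult.assoc)
  finally show ?thesis
    unfolding nn_integral_N_eq_chernoff pN_def[symmetric] F_def[symmetric] c_def[symmetric] .
qed

lemma emeasure_S_gt_le: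
  assumes s: "s > 0" and \<theta>: "\<theta> \<ge> 0"
    and mgf: "(\<integral>\<^sup>+\<omega>. ennreal (exp (\<theta> * min (X 1 \<omega>) x)) \<partial>M) \<le> ennreal (exp s)"
  shows "emeasure M {\<omega>\<in>space M. S \<omega> > x} \<le>
     (\<integral>\<^sup>+\<omega>. ennreal (exp (s * real (N \<omega>))) \<partial>M) * ennreal (prob {\<omega>\<in>space M. X 1 \<omega> > x} / s + exp (- \<theta> * x))"
proof -
  define \<Phi> where "\<Phi> n \<omega> = (\<Sum>i\<in>{1..n}. indicator {x<..} (X i \<omega>)) +
     ennreal (exp (- \<theta> * x)) * (\<Prod>i\<in>{1..n}. ennreal (exp (\<theta> * min (X i \<omega>) x)))" for n \<omega>
  have "emeasure M {\<omega>\<in>space M. S \<omega> > x} = (\<integral>\<^sup>+\<omega>. indicator {\<omega>\<in>space M. S \<omega> > x} \<omega> \<partial>M)"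
    by simp
  also have "\<dots> \<le> (\<integral>\<^sup>+\<omega>. \<Phi> (N \<omega>) \<omega> \<partial>M)"
    by (rule nn_integral_mono) (use indicator_S_gt_le[OF \<theta>] in \<open>simp add: \<Phi>_def\<close>)
  also have "\<dots> = (\<Sum>n. \<integral>\<^sup>+\<omega>. indicator {real n} (real (N \<omega>)) * \<Phi> n \<omega> \<partial>M)"
    by (rule nn_integral_split_N) (unfold \<Phi>_def, measurable)
  also have "\<dots> \<le> (\<Sum>n. emeasure M {\<omega>\<in>space M. N \<omega> = n} * ennreal (exp (s * real n))
      * ennreal (prob {\<omega>\<in>space M. X 1 \<omega> > x} / s + exp (- \<theta> * x)))"
    by (intro suminf_le) (use nn_integral_N_eq_chernoff_le[OF s mgf] in \<open>auto simp: \<Phi>_def\<close>)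
  also have "\<dots> = (\<integral>\<^sup>+\<omega>. ennreal (exp (s * real (N \<omega>))) \<partial>M)
      * ennreal (prob {\<omega>\<in>space M. X 1 \<omega> > x} / s + exp (- \<theta> * x))"
    by (simp add: nn_integral_exp_N)
  finally show ?thesis .
qed

lemma eventually_prob_S_gt_le:
  assumes e: "0 < e" "e < 1"
  shows "\<exists>K>0. eventually (\<lambda>x. prob {\<omega>\<in>space M. S \<omega> > x} \<le> K * exp (- (1 - e) * h x)) at_top"
proof -
  obtain s where s: "s > 0" and finite_mgf: "(\<integral>\<^sup>+\<omega>. ennreal (exp (s * real (N \<omega>))) \<partial>M) \<noteq> \<infinity>"
    using N_light unfolding light_tailed_def heavy_tailed_def by auto
  define G where "G = enn2real (\<integral>\<^sup>+\<omega>. ennreal (exp (s * real (N \<omega>))) \<partial>M)"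
  have G: "(\<integral>\<^sup>+\<omega>. ennreal (exp (s * real (N \<omega>))) \<partial>M) = ennreal G" "G \<ge> 0"
    using finite_mgf unfolding G_def by (auto simp: ennreal_enn2real_if less_top)
  obtain C where C: "C \<ge> 1" "\<And>t. t \<ge> 0 \<Longrightarrow> prob {\<omega>\<in>space M. X 1 \<omega> > t} \<le> C * exp (- (1 - e) * h t)"
    using tail_prob_le_uniform[OF e(1)] by auto
  define K where "K = G * (C / s + 1) + 1"
  have K: "K > 0" unfolding K_def using G C s by (simp add: add_nonneg_pos)
  have "eventually (\<lambda>x. prob {\<omega>\<in>space M. S \<omega> > x} \<le> K * exp (- (1 - e) * h x)) at_top"
    using eventually_truncated_mgf_le_exp[OF s e] eventually_ge_at_top[of 1]
  proof eventually_elim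
    case (elim x)
    define \<theta> where "\<theta> = (1 - e) * (h x / x)"
    define E where "E = exp (- (1 - e) * h x)"
    have x: "x \<ge> 1" and \<theta>: "\<theta> \<ge> 0" using elim e h_nonneg[of x] unfolding \<theta>_def by auto
    have "\<theta> * x = (1 - e) * h x" unfolding \<theta>_def using x by simp
    then have "exp (- \<theta> * x) = E" unfolding E_def by (metis minus_mult_left)
    then have "emeasure M {\<omega>\<in>space M. S \<omega> > x} \<le> ennreal G * ennreal (prob {\<omega>\<in>space M. X 1 \<omega> > x} / s + E)"
      using emeasure_S_gt_le[OF s \<theta>, of x] elim G unfolding \<theta>_def by simp
    then have "ennreal (prob {\<omega>\<in>space M. S \<omega> > x}) \<le> ennreal (G * (prob {\<omega>\<in>space M. X 1 \<omega> > x} / s + E))"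
      using G s unfolding E_def by (simp add: emeasure_eq_measure ennreal_mult)
    then have "prob {\<omega>\<in>space M. S \<omega> > x} \<le> G * (prob {\<omega>\<in>space M. X 1 \<omega> > x} / s + E)"
      using G s unfolding E_def by (subst (asm) ennreal_le_iff) auto
    also have "\<dots> \<le> G * (C * E / s + E)"
      using C(2)[of x] x G s unfolding E_def by (intro mult_left_mono add_right_mono divide_right_mono) auto
    also have "\<dots> \<le> K * E" unfolding K_def E_def by (simp add: algebra_simps)
    finally show ?case unfolding E_def .
  qed
  then show ?thesis using K by blast
qed

lemma natural_scale_S: "natural_scale M S h"
proof -
  obtain c K where cK: "c \<ge> 0" "K > 0"
    "\<And>y. K * prob {\<omega>\<in>space M. X 1 \<omega> > y} \<le> prob {\<omega>\<in>space M. S \<omega> > y - c}"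
    using exists_prob_S_gt_shift_ge by blast
  have "Liminf at_top (\<lambda>x. tail_rate M S x / ereal (h x)) \<le> 1"
    by (rule Liminf_tail_rate_le_one[OF h_concave h_nonneg h_zero h_at_top eq_refl[OF Liminf_eq_one] cK])
  moreover have "1 \<le> Liminf at_top (\<lambda>x. tail_rate M S x / ereal (h x))"
    by (rule Liminf_tail_rate_ge_one[OF h_at_top eventually_prob_S_gt_le])
  ultimately show ?thesis
    unfolding natural_scale_def using heavy_tailed_S h_concave h_nonneg h_zero h_at_top by auto
qed

end

theorem mainTheorem10:
  fixes M :: "'a measure" and X :: "nat \<Rightarrow> 'a \<Rightarrow> real" and N :: "'a \<Rightarrow> nat"
    and h :: "real \<Rightarrow> real" and \<delta> :: real
  assumes "prob_space M"
    and indep: "prob_space.indep_vars M (\<lambda>_. borel)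
                  (\<lambda>i \<omega>. if i = 0 then real (N \<omega>) else X i \<omega>) UNIV"
    and ident: "\<And>i. i \<ge> 1 \<Longrightarrow> distr M borel (X i) = distr M borel (X 1)"
    and heavy: "heavy_tailed M (X 1)"
    and int: "integrable M (X 1)"
    and mean_pos: "0 < (\<integral>\<omega>. X 1 \<omega> \<partial>M)"
    and \<delta>_pos: "\<delta> > 0"
    and moment: "(\<integral>\<^sup>+ \<omega>. ennreal ((max 0 (X 1 \<omega>)) powr (1 + \<delta>)) \<partial>M) < \<infinity>"
    and N_pos: "\<And>\<omega>. \<omega> \<in> space M \<Longrightarrow> N \<omega> \<ge> 1"
    and N_light: "light_tailed M (\<lambda>\<omega>. real (N \<omega>))"
    and scale: "natural_scale M (X 1) h"
    and h_log: "\<forall>\<^sub>F x in at_top. h x \<ge> (1 + \<delta>) * ln x"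
  shows "natural_scale M (\<lambda>\<omega>. \<Sum>k=1..N \<omega>. X k \<omega>) h"
proof -
  interpret random_sum M X N h
    using assms(1) by (rule random_sum.intro) (rule random_sum_axioms.intro[OF indep ident N_pos N_light scale])
  show ?thesis using natural_scale_S unfolding S_def .
qed

end
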